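(* Let $0<b\leq a$ and let $\mathcal E(a,b)=\{x=(x_1,x_2)\in\mathbb R^2 : (x_1/a)^2+(x_2/b)^2=1\}$. For $q=(q_1,q_2)\in\mathbb R^2$ define $$\mathbf d^2(q):=\min\{|x-q|^2 : x\in\mathcal E(a,b)\}$$ and the quartic polynomial in $\lambda$ $$P(\lambda):=\big((\lambda-a^2)(\lambda-b^2)\big)^2-a^2q_1^2(\lambda-b^2)^2-b^2q_2^2(\lambda-a^2)^2 .$$ Let $\lambda^*(q)$ denote the smallest real root of $P$. Then $$\mathbf d^2(q)=\begin{cases} \left(\dfrac{\lambda^*(q)}{a^2-\lambda^*(q)}\,q_1\right)^2+\left(\dfrac{\lambda^*(q)}{b^2-\lambda^*(q)}\,q_2\right)^2 & \text{if } q_2\neq 0 \text{ or } a^2-a|q_1|<b^2,\\[2mm] b^2 & \text{if } q_1=q_2=0,\\[2mm] b^2-\dfrac{b^2}{a^2-b^2}\,q_1^2 & \text{if } q_2=0,\ q_1\neq 0 \text{ and } a^2-a|q_1|\geq b^2. \end{cases}$$ Moreover, $\lambda^*(q)=a^2-a|q|$ if $a=b$; if $b<a$ and $q_2\neq0$, $\lambda^*(q)$ is the unique root of $P$ in $(-\infty,b^2)$; and if $b<a$ and $q_2=0$, $\lambda^*(q)=\min\{a^2-a|q_1|,\,b^2\}$.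
   Context: $|\cdot|$ denotes the Euclidean norm on $\mathbb R^2$. $\mathbf d^2(q)$ is the squared Euclidean distance from $q$ to the ellipse curve $\mathcal E(a,b)$ (centered at the origin with semi-axes $a$ along the $x_1$-axis and $b$ along the $x_2$-axis). *)

theory Defs
  imports Complex_Main
begin

definition ellipse :: "real \<Rightarrow> real \<Rightarrow> (real \<times> real) set" where
  "ellipse a b = {(x1, x2). (x1 / a)^2 + (x2 / b)^2 = 1}"

definition sqdists :: "real \<Rightarrow> real \<Rightarrow> real \<Rightarrow> real \<Rightarrow> real set" where
  "sqdists a b q1 q2 = {(x1 - q1)^2 + (x2 - q2)^2 | x1 x2. (x1, x2) \<in> ellipse a b}"

text \<open>d^2(q): the minimum of the squared distances (taken as the infimum; the theorem also
  asserts it is attained).\<close>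
definition dist2_ell :: "real \<Rightarrow> real \<Rightarrow> real \<Rightarrow> real \<Rightarrow> real" where
  "dist2_ell a b q1 q2 = Inf (sqdists a b q1 q2)"

definition Pq :: "real \<Rightarrow> real \<Rightarrow> real \<Rightarrow> real \<Rightarrow> real \<Rightarrow> real" where
  "Pq a b q1 q2 l = ((l - a^2) * (l - b^2))^2 - a^2 * q1^2 * (l - b^2)^2
                      - b^2 * q2^2 * (l - a^2)^2"

definition lam_star :: "real \<Rightarrow> real \<Rightarrow> real \<Rightarrow> real \<Rightarrow> real" where
  "lam_star a b q1 q2 = (LEAST l. Pq a b q1 q2 l = 0)"

end

theory Submission
  imports Defs
begin

(* Weak Lagrange duality does all the work.  Completing the squares shows that for every
   multiplier l \<le> b^2 and every x on the ellipse
     |x - q|^2 = (a^2 - l)/a^2 (x1 - a^2 q1/(a^2 - l))^2 + (b^2 - l)/b^2 (x2 - b^2 q2/(b^2 - l))^2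
                 + l (1 - q1^2/(a^2 - l) - q2^2/(b^2 - l)),
   so the last term is a lower bound for d^2(q).  If l < b^2 is a root of P, the point
   (a^2 q1/(a^2 - l), b^2 q2/(b^2 - l)) lies on the ellipse and attains the bound.  Otherwise
   q2 = 0 and l = b^2 works, the minimiser being (a^2 q1/(a^2 - b^2), x2) for a suitable x2.
   Below b^2 the roots of P are the solutions of
     a^2 q1^2/(a^2 - l)^2 + b^2 q2^2/(b^2 - l)^2 = 1,
   whose left-hand side increases strictly from 0 to +\<infinity> when q2 \<noteq> 0, so there is exactly one;
   for a = b or q2 = 0 the polynomial P factors explicitly. *)

definition is_least :: "'a::ord set \<Rightarrow> 'a \<Rightarrow> bool" where
  "is_least S m \<longleftrightarrow> m \<in> S \<and> (\<forall>x\<in>S. m \<le> x)"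

lemma lam_star_eqI: "is_least {l. Pq a b q1 q2 l = 0} l0 \<Longrightarrow> lam_star a b q1 q2 = l0"
  unfolding lam_star_def is_least_def by (rule Least_equality) auto

lemma dist2_ell_eqI: "is_least (sqdists a b q1 q2) m \<Longrightarrow> dist2_ell a b q1 q2 = m"
  unfolding dist2_ell_def is_least_def by (rule cInf_eq_minimum) auto

lemma Pq_circle: "Pq a a q1 q2 l = (l - a^2)^2 * ((l - a^2)^2 - (a * sqrt (q1^2 + q2^2))^2)"
  unfolding Pq_def by (simp add: power_mult_distrib algebra_simps power2_eq_square)

lemma is_least_roots_circle:
  fixes a q1 q2 :: real
  assumes "0 \<le> a"
  shows "is_least {l. Pq a a q1 q2 l = 0} (a^2 - a * sqrt (q1^2 + q2^2))"
proof -
  have "0 \<le> a * sqrt (q1^2 + q2^2)" using assms by simp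
  then show ?thesis
    unfolding is_least_def Pq_circle by (auto simp: power2_eq_iff)
qed

lemma lam_star_circle: "0 \<le> a \<Longrightarrow> lam_star a a q1 q2 = a^2 - a * sqrt (q1^2 + q2^2)"
  by (rule lam_star_eqI[OF is_least_roots_circle])

lemma Pq_axis: "Pq a b q1 0 l = (l - b^2)^2 * ((l - a^2)^2 - (a * \<bar>q1\<bar>)^2)"
  unfolding Pq_def by (simp add: power_mult_distrib) algebra

lemma is_least_roots_axis:
  fixes a b q1 :: real
  assumes "0 \<le> a"
  shows "is_least {l. Pq a b q1 0 l = 0} (min (a^2 - a * \<bar>q1\<bar>) (b^2))"
proof -
  have "0 \<le> a * \<bar>q1\<bar>" using assms by simp
  then show ?thesis
    unfolding is_least_def Pq_axis by (auto simp: power2_eq_iff min_def)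
qed

lemma lam_star_axis: "0 \<le> a \<Longrightarrow> lam_star a b q1 0 = min (a^2 - a * \<bar>q1\<bar>) (b^2)"
  by (rule lam_star_eqI[OF is_least_roots_axis])

definition secular :: "real \<Rightarrow> real \<Rightarrow> real \<Rightarrow> real \<Rightarrow> real \<Rightarrow> real" where
  "secular a b q1 q2 l = a^2 * q1^2 / (a^2 - l)^2 + b^2 * q2^2 / (b^2 - l)^2"

lemma Pq_eq_secular:
  assumes "l \<noteq> a^2" "l \<noteq> b^2"
  shows "Pq a b q1 q2 l = ((l - a^2) * (l - b^2))^2 * (1 - secular a b q1 q2 l)"
proof -
  have "a^2 - l \<noteq> 0" "b^2 - l \<noteq> 0" using assms by auto
  then have "((l - a^2) * (l - b^2))^2 * (a^2 * q1^2 / (a^2 - l)^2) = a^2 * q1^2 * (l - b^2)^2"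
    and "((l - a^2) * (l - b^2))^2 * (b^2 * q2^2 / (b^2 - l)^2) = b^2 * q2^2 * (l - a^2)^2"
    by (simp_all add: power_mult_distrib power2_commute[of l])
  then show ?thesis
    unfolding Pq_def secular_def by (simp add: right_diff_distrib distrib_left)
qed

lemma Pq_root_iff_secular:
  assumes "b^2 \<le> a^2" "l < b^2"
  shows "Pq a b q1 q2 l = 0 \<longleftrightarrow> secular a b q1 q2 l = 1"
  using assms by (simp add: Pq_eq_secular)

lemma secular_strict_mono:
  assumes "b \<noteq> 0" "q2 \<noteq> 0" "b^2 \<le> a^2" "l < m" "m < b^2"
  shows "secular a b q1 q2 l < secular a b q1 q2 m"
proof -
  have "(a^2 - m)^2 < (a^2 - l)^2" "(b^2 - m)^2 < (b^2 - l)^2"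
    using assms by (simp_all add: power_strict_mono)
  then have "a^2 * q1^2 / (a^2 - l)^2 \<le> a^2 * q1^2 / (a^2 - m)^2"
    and "b^2 * q2^2 / (b^2 - l)^2 < b^2 * q2^2 / (b^2 - m)^2"
    using assms by (auto intro!: divide_left_mono divide_strict_left_mono)
  then show ?thesis unfolding secular_def by linarith
qed

lemma secular_less_1:
  fixes a b q1 q2 :: real
  assumes "b^2 \<le> a^2"
  defines "M \<equiv> 1 + \<bar>a * q1\<bar> + \<bar>b * q2\<bar>"
  shows "secular a b q1 q2 (b^2 - M) < 1"
proof -
  have M: "0 < M" "M \<le> a^2 - (b^2 - M)" using assms by auto
  have "a^2 * q1^2 + b^2 * q2^2 \<le> (\<bar>a * q1\<bar> + \<bar>b * q2\<bar>)^2"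
    by (simp add: power2_eq_square abs_mult algebra_simps)
  also have "\<dots> < M^2" unfolding M_def by (simp add: power_strict_mono)
  finally have sum: "a^2 * q1^2 + b^2 * q2^2 < M^2" .
  have "a^2 * q1^2 / (a^2 - (b^2 - M))^2 \<le> a^2 * q1^2 / M^2"
    using M by (intro divide_left_mono power_mono) auto
  then have "secular a b q1 q2 (b^2 - M) \<le> (a^2 * q1^2 + b^2 * q2^2) / M^2"
    unfolding secular_def by (simp add: add_divide_distrib)
  also have "\<dots> < 1" using sum M by simp
  finally show ?thesis .
qed

lemma Pq_ex1_root_below:
  fixes a b q1 q2 :: real
  assumes "0 < b" "b < a" "q2 \<noteq> 0"
  shows "\<exists>!l. l < b^2 \<and> Pq a b q1 q2 l = 0"
proof -
  have ba: "b^2 < a^2" using assms by (simp add: power_strict_mono)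
  define l1 where "l1 = b^2 - (1 + \<bar>a * q1\<bar> + \<bar>b * q2\<bar>)"
  have l1: "l1 < b^2" unfolding l1_def by simp
  have "0 < ((l1 - a^2) * (l1 - b^2))^2" using l1 ba by simp
  then have "0 < Pq a b q1 q2 l1"
    using l1 ba secular_less_1[of b a q1 q2] by (simp add: Pq_eq_secular l1_def)
  moreover have "Pq a b q1 q2 (b^2) < 0"
    using assms ba unfolding Pq_def by simp
  moreover have "isCont (Pq a b q1 q2) x" for x
    unfolding Pq_def by (intro continuous_intros)
  ultimately obtain l0 where l0: "l1 \<le> l0" "l0 \<le> b^2" "Pq a b q1 q2 l0 = 0"
    using IVT2[of "Pq a b q1 q2" "b^2" 0 l1] l1 by force
  with \<open>Pq a b q1 q2 (b^2) < 0\<close> have "l0 < b^2" by (cases "l0 = b^2") auto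
  moreover have "l = l0" if "l < b^2" "Pq a b q1 q2 l = 0" for l
  proof -
    have "secular a b q1 q2 l = secular a b q1 q2 l0"
      using Pq_root_iff_secular[of b a] ba that l0(3) \<open>l0 < b^2\<close> by simp
    then show ?thesis
      using secular_strict_mono[of b q2 a _ _ q1] assms ba that(1) \<open>l0 < b^2\<close>
      by (cases l l0 rule: linorder_cases) fastforce+
  qed
  ultimately show ?thesis using l0 by blast
qed

lemma is_least_roots_below:
  fixes a b q1 q2 l0 :: real
  assumes "0 < b" "b < a" "q2 \<noteq> 0" "l0 < b^2" "Pq a b q1 q2 l0 = 0"
  shows "is_least {l. Pq a b q1 q2 l = 0} l0"
proof -
  have "l0 \<le> l" if "Pq a b q1 q2 l = 0" for l
  proof (cases "l < b^2")
    case True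
    then show ?thesis using Pq_ex1_root_below[OF assms(1-3)] assms(4,5) that by blast
  qed (use assms(4) in simp)
  then show ?thesis unfolding is_least_def using assms(5) by simp
qed

lemma lam_star_off_axis:
  fixes a b q1 q2 :: real
  assumes "0 < b" "b < a" "q2 \<noteq> 0"
  shows "lam_star a b q1 q2 < b^2 \<and> Pq a b q1 q2 (lam_star a b q1 q2) = 0
    \<and> (\<forall>l<b^2. Pq a b q1 q2 l = 0 \<longrightarrow> l = lam_star a b q1 q2)"
proof -
  obtain l0 where l0: "l0 < b^2" "Pq a b q1 q2 l0 = 0"
    and uniq: "\<And>l. l < b^2 \<Longrightarrow> Pq a b q1 q2 l = 0 \<Longrightarrow> l = l0"
    using Pq_ex1_root_below[OF assms] by blast
  have "lam_star a b q1 q2 = l0"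
    by (rule lam_star_eqI) (rule is_least_roots_below[OF assms l0])
  then show ?thesis using l0 uniq by blast
qed

lemma lam_star_is_least_root:
  fixes a b q1 q2 :: real
  assumes "0 < b" "b \<le> a"
  shows "is_least {l. Pq a b q1 q2 l = 0} (lam_star a b q1 q2)"
proof -
  have "\<exists>l0. is_least {l. Pq a b q1 q2 l = 0} l0"
  proof (cases "a = b")
    case True
    then show ?thesis using is_least_roots_circle[of a q1 q2] assms by auto
  next
    case False
    then have "b < a" using assms by simp
    show ?thesis
    proof (cases "q2 = 0")
      case True
      then show ?thesis using is_least_roots_axis[of a b q1] assms by auto
    next
      case False
      then show ?thesis
        using Pq_ex1_root_below[OF assms(1) \<open>b < a\<close> False]
          is_least_roots_below[OF assms(1) \<open>b < a\<close> False] by blast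
    qed
  qed
  then show ?thesis using lam_star_eqI by blast
qed

lemma lam_star_less_b2:
  fixes a b q1 q2 :: real
  assumes "0 < b" "b \<le> a" and off: "q2 \<noteq> 0 \<or> a^2 - a * \<bar>q1\<bar> < b^2"
  shows "lam_star a b q1 q2 < b^2"
proof (cases "a = b")
  case True
  with off assms(1) have "q1^2 + q2^2 > 0" by (auto simp: sum_power2_gt_zero_iff)
  with True assms(1) show ?thesis using lam_star_circle[of a q1 q2] by simp
next
  case False
  then have "b < a" using assms by simp
  show ?thesis
  proof (cases "q2 = 0")
    case True
    then show ?thesis using off lam_star_axis[of a b q1] assms by simp
  next
    case False
    then show ?thesis using lam_star_off_axis[OF assms(1) \<open>b < a\<close>] by blast
  qed
qed

(* For l = u and q = 0 both sides are 0 (division by zero yields 0 in HOL); this degenerate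
   case is what allows the multiplier l = b^2 when q2 = 0. *)
lemma complete_square:
  fixes u l x q :: real
  assumes "u \<noteq> 0" "l \<noteq> u \<or> q = 0"
  shows "(x - q)^2 - l * x^2 / u = (u - l) / u * (x - u * q / (u - l))^2 - l * q^2 / (u - l)"
proof (cases "l = u")
  case False
  have "(x - q)^2 - (u - A) * x^2 / u = A / u * (x - u * q / A)^2 - (u - A) * q^2 / A"
    if "A \<noteq> 0" for A
    using assms(1) that by (simp add: field_simps power2_eq_square)
  from this[of "u - l"] False show ?thesis by simp
qed (use assms in simp)

definition lagrange_dual :: "real \<Rightarrow> real \<Rightarrow> real \<Rightarrow> real \<Rightarrow> real \<Rightarrow> real" where
  "lagrange_dual a b q1 q2 l = l * (1 - q1^2 / (a^2 - l) - q2^2 / (b^2 - l))"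

lemma sqdist_ellipse_lagrange:
  fixes a b l x1 x2 q1 q2 :: real
  assumes "a \<noteq> 0" "b \<noteq> 0" "l \<noteq> a^2 \<or> q1 = 0" "l \<noteq> b^2 \<or> q2 = 0"
    and "(x1, x2) \<in> ellipse a b"
  shows "(x1 - q1)^2 + (x2 - q2)^2
    = (a^2 - l) / a^2 * (x1 - a^2 * q1 / (a^2 - l))^2 + (b^2 - l) / b^2 * (x2 - b^2 * q2 / (b^2 - l))^2
      + lagrange_dual a b q1 q2 l"
proof -
  have "x1^2 / a^2 + x2^2 / b^2 = 1" using assms(5) by (simp add: ellipse_def power_divide)
  then have "l * x1^2 / a^2 + l * x2^2 / b^2 = l"
    by (metis add_divide_distrib mult.right_neutral times_divide_eq_right distrib_left)
  then have "(x1 - q1)^2 + (x2 - q2)^2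
      = ((x1 - q1)^2 - l * x1^2 / a^2) + ((x2 - q2)^2 - l * x2^2 / b^2) + l"
    by simp
  then show ?thesis
    using complete_square[of "a^2" l q1 x1] complete_square[of "b^2" l q2 x2] assms(1-4)
    by (simp add: lagrange_dual_def algebra_simps)
qed

lemma lagrange_dual_le_sqdists:
  fixes a b l q1 q2 d :: real
  assumes "0 < b" "b \<le> a" "l \<le> b^2" "l < b^2 \<or> q2 = 0" "l < a^2 \<or> q1 = 0"
    and "d \<in> sqdists a b q1 q2"
  shows "lagrange_dual a b q1 q2 l \<le> d"
proof -
  obtain x1 x2 where d: "d = (x1 - q1)^2 + (x2 - q2)^2" "(x1, x2) \<in> ellipse a b"
    using assms(6) unfolding sqdists_def by blast
  have "b^2 \<le> a^2" using assms by (simp add: power_mono)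
  then have "0 \<le> (a^2 - l) / a^2 * (x1 - a^2 * q1 / (a^2 - l))^2"
    and "0 \<le> (b^2 - l) / b^2 * (x2 - b^2 * q2 / (b^2 - l))^2"
    using assms(3) by simp_all
  moreover have "l \<noteq> a^2 \<or> q1 = 0" "l \<noteq> b^2 \<or> q2 = 0" using assms(4,5) by auto
  then have "d = (a^2 - l) / a^2 * (x1 - a^2 * q1 / (a^2 - l))^2
      + (b^2 - l) / b^2 * (x2 - b^2 * q2 / (b^2 - l))^2 + lagrange_dual a b q1 q2 l"
    using sqdist_ellipse_lagrange[OF _ _ _ _ d(2)] d(1) assms(1,2) by simp
  ultimately show ?thesis by linarith
qed

lemma is_least_sqdists_foot:
  fixes a b l q1 q2 :: real
  assumes "0 < b" "b \<le> a" "l < b^2" "Pq a b q1 q2 l = 0"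
  shows "is_least (sqdists a b q1 q2) ((l / (a^2 - l) * q1)^2 + (l / (b^2 - l) * q2)^2)"
proof -
  have ba: "b^2 \<le> a^2" using assms by (simp add: power_mono)
  then have nz: "a^2 - l \<noteq> 0" "b^2 - l \<noteq> 0" using assms(3) by auto
  define x1 where "x1 = a^2 * q1 / (a^2 - l)"
  define x2 where "x2 = b^2 * q2 / (b^2 - l)"
  have "(x1 / a)^2 + (x2 / b)^2 = secular a b q1 q2 l"
    using assms(1,2) unfolding x1_def x2_def secular_def by (simp add: power2_eq_square ac_simps)
  also have "\<dots> = 1" using Pq_root_iff_secular[OF ba assms(3)] assms(4) by simp
  finally have foot: "(x1, x2) \<in> ellipse a b" by (simp add: ellipse_def)
  have "(x1 - q1)^2 + (x2 - q2)^2 = (l / (a^2 - l) * q1)^2 + (l / (b^2 - l) * q2)^2"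
    using nz unfolding x1_def x2_def by (simp add: field_simps)
  moreover have "(x1 - q1)^2 + (x2 - q2)^2 = lagrange_dual a b q1 q2 l"
    using sqdist_ellipse_lagrange[OF _ _ _ _ foot, of l q1 q2] nz assms(1,2) unfolding x1_def x2_def by simp
  moreover have "(x1 - q1)^2 + (x2 - q2)^2 \<in> sqdists a b q1 q2"
    using foot unfolding sqdists_def by blast
  moreover have "lagrange_dual a b q1 q2 l \<le> d" if "d \<in> sqdists a b q1 q2" for d
    using lagrange_dual_le_sqdists[OF assms(1,2) _ _ _ that, where l = l] assms(3) ba by simp
  ultimately show ?thesis unfolding is_least_def by auto
qed

lemma is_least_sqdists_axis:
  fixes a b q1 :: real
  assumes "0 < b" "b \<le> a" "b^2 \<le> a^2 - a * \<bar>q1\<bar>"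
  shows "is_least (sqdists a b q1 0) (b^2 - b^2 / (a^2 - b^2) * q1^2)"
proof -
  have a: "0 < a" using assms by simp
  have circle: "q1 = 0" if "a = b"
    using that assms(3) a by (simp add: mult_le_0_iff)
  define x1 where "x1 = a^2 * q1 / (a^2 - b^2)"
  have "\<bar>x1\<bar> \<le> a"
  proof (cases "a = b")
    case False
    then have gap: "0 < a^2 - b^2" using assms by (simp add: power_strict_mono)
    have "a^2 * \<bar>q1\<bar> \<le> a * (a^2 - b^2)"
      using mult_left_mono[OF _ less_imp_le[OF a], of "a * \<bar>q1\<bar>" "a^2 - b^2"] assms(3)
      by (simp add: power2_eq_square mult.assoc)
    then show ?thesis using gap unfolding x1_def by (simp add: abs_mult pos_divide_le_eq)
  qed (use a in \<open>simp add: x1_def\<close>)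
  then have "x1^2 \<le> a^2" using a by (metis abs_le_square_iff abs_of_pos)
  then have "(x1 / a)^2 \<le> 1" using a by (simp add: power_divide)
  define x2 where "x2 = b * sqrt (1 - (x1 / a)^2)"
  have "(x2 / b)^2 = 1 - (x1 / a)^2"
    using \<open>(x1 / a)^2 \<le> 1\<close> assms(1) unfolding x2_def by simp
  then have foot: "(x1, x2) \<in> ellipse a b" by (simp add: ellipse_def)
  have "b^2 \<noteq> a^2 \<or> q1 = 0" using circle a assms(1) by auto
  then have "(x1 - q1)^2 + (x2 - 0)^2 = lagrange_dual a b q1 0 (b^2)"
    using sqdist_ellipse_lagrange[OF _ _ _ _ foot, of "b^2" q1 0] a assms(1)
    unfolding x1_def by simp
  moreover have "lagrange_dual a b q1 0 (b^2) = b^2 - b^2 / (a^2 - b^2) * q1^2"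
    unfolding lagrange_dual_def by (simp add: algebra_simps)
  moreover have "(x1 - q1)^2 + (x2 - 0)^2 \<in> sqdists a b q1 0"
    using foot unfolding sqdists_def by blast
  moreover have "b^2 < a^2 \<or> q1 = 0"
    using circle assms(1,2) by (cases "a = b") (auto simp: power_strict_mono)
  ultimately show ?thesis
    unfolding is_least_def using lagrange_dual_le_sqdists[OF assms(1,2), of "b^2" 0 q1] by auto
qed

theorem mainTheorem1:
  fixes a b q1 q2 :: real
  assumes "0 < b" and "b \<le> a"
  shows "Pq a b q1 q2 (lam_star a b q1 q2) = 0 \<and> (\<forall>l. Pq a b q1 q2 l = 0 \<longrightarrow> lam_star a b q1 q2 \<le> l)
    \<and> dist2_ell a b q1 q2 \<in> sqdists a b q1 q2 \<and> (\<forall>d\<in>sqdists a b q1 q2. dist2_ell a b q1 q2 \<le> d)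
    \<and> ((q2 \<noteq> 0 \<or> a^2 - a * \<bar>q1\<bar> < b^2) \<longrightarrow>
           dist2_ell a b q1 q2 =
             (lam_star a b q1 q2 / (a^2 - lam_star a b q1 q2) * q1)^2
             + (lam_star a b q1 q2 / (b^2 - lam_star a b q1 q2) * q2)^2)
    \<and> ((q1 = 0 \<and> q2 = 0) \<longrightarrow> dist2_ell a b q1 q2 = b^2)
    \<and> ((q2 = 0 \<and> q1 \<noteq> 0 \<and> a^2 - a * \<bar>q1\<bar> \<ge> b^2) \<longrightarrow>
           dist2_ell a b q1 q2 = b^2 - b^2 / (a^2 - b^2) * q1^2)
    \<and> (a = b \<longrightarrow> lam_star a b q1 q2 = a^2 - a * sqrt (q1^2 + q2^2))
    \<and> ((b < a \<and> q2 \<noteq> 0) \<longrightarrow>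
           lam_star a b q1 q2 < b^2 \<and> Pq a b q1 q2 (lam_star a b q1 q2) = 0
           \<and> (\<forall>l<b^2. Pq a b q1 q2 l = 0 \<longrightarrow> l = lam_star a b q1 q2))
    \<and> ((b < a \<and> q2 = 0) \<longrightarrow> lam_star a b q1 q2 = min (a^2 - a * \<bar>q1\<bar>) (b^2))"
proof -
  define L where "L = lam_star a b q1 q2"
  have ba: "b^2 \<le> a^2" using assms by (simp add: power_mono)
  have roots: "is_least {l. Pq a b q1 q2 l = 0} L"
    unfolding L_def by (rule lam_star_is_least_root[OF assms])
  obtain m where least: "is_least (sqdists a b q1 q2) m"
    and m_off: "q2 \<noteq> 0 \<or> a^2 - a * \<bar>q1\<bar> < b^2 \<Longrightarrow>
      m = (L / (a^2 - L) * q1)^2 + (L / (b^2 - L) * q2)^2"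
    and m_axis: "q2 = 0 \<Longrightarrow> a^2 - a * \<bar>q1\<bar> \<ge> b^2 \<Longrightarrow> m = b^2 - b^2 / (a^2 - b^2) * q1^2"
  proof (cases "q2 \<noteq> 0 \<or> a^2 - a * \<bar>q1\<bar> < b^2")
    case True
    have "L < b^2" unfolding L_def by (rule lam_star_less_b2[OF assms True])
    with roots have "is_least (sqdists a b q1 q2) ((L / (a^2 - L) * q1)^2 + (L / (b^2 - L) * q2)^2)"
      using is_least_sqdists_foot[OF assms] unfolding is_least_def by simp
    with True that show ?thesis by auto
  next
    case False
    with is_least_sqdists_axis[OF assms, of q1] that show ?thesis by auto
  qed
  have dist: "dist2_ell a b q1 q2 = m" by (rule dist2_ell_eqI[OF least])
  have "m = b^2" if "q1 = 0" "q2 = 0" using m_axis that ba by simp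
  moreover have "L = a^2 - a * sqrt (q1^2 + q2^2)" if "a = b"
    using lam_star_circle[of a q1 q2] assms that unfolding L_def by simp
  moreover have "L = min (a^2 - a * \<bar>q1\<bar>) (b^2)" if "q2 = 0"
    using lam_star_axis[of a b q1] assms that unfolding L_def by simp
  moreover have "L < b^2 \<and> (\<forall>l<b^2. Pq a b q1 q2 l = 0 \<longrightarrow> l = L)" if "b < a" "q2 \<noteq> 0"
    using lam_star_off_axis[OF assms(1) that] unfolding L_def by blast
  ultimately show ?thesis
    using roots least dist m_off m_axis unfolding L_def[symmetric] is_least_def by auto
qed

end
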